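(* Fix an agent $i\in\mathit{Agt}$. For each operator $O\in\{\mathcal{A}_i,\mathcal{R}_i,\mathcal{A}^{\mathsf{real}}_i,\mathcal{R}^{\mathsf{real}}_i\}$ the operator $O$ is not expressible by means of the other modalities of $\mathcal{L}$ (including each other): there exist an atom $p\in\mathit{Atm}$ such that no formula $\varphi\in\mathcal{L}$ in which no operator of the same kind as $O$ occurs (i.e. no $\mathcal{A}_j$ if $O=\mathcal{A}_i$, no $\mathcal{R}_j$ if $O=\mathcal{R}_i$, no $\mathcal{A}^{\mathsf{real}}_j$ if $O=\mathcal{A}^{\mathsf{real}}_i$, no $\mathcal{R}^{\mathsf{real}}_j$ if $O=\mathcal{R}^{\mathsf{real}}_i$, for any agent $j$) satisfies $\models O\,p\leftrightarrow\varphi$.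
   Context: Let $\mathit{Agt}=\{1,\dots,n\}$ be a finite set of agents and $\mathit{Atm}$ a countably infinite set of atoms containing, for each $i\in\mathit{Agt}$, special atoms $\mathsf{rew}_i$ ("$i$ gets a reward") and $\mathsf{pun}_i$ ("$i$ gets a punishment"). The language $\mathcal{L}_0$ is given by $\alpha::=p\mid\neg\alpha\mid\alpha\wedge\alpha\mid \triangle_i\alpha$ ($p\in\mathit{Atm}$, $i\in\mathit{Agt}$; $\triangle_i\alpha$ = "$i$ explicitly believes $\alpha$"); $\to,\vee,\leftrightarrow,\top,\bot$ are the usual abbreviations. A state is a tuple $S=((B_i)_{i\in\mathit{Agt}},V)$ with $B_i\subseteq\mathcal{L}_0$ (belief base) and $V\subseteq\mathit{Atm}$; $\mathbf{S}$ is the set of all states. Truth of $\mathcal{L}_0$-formulas: $S\models p$ iff $p\in V$; Boolean clauses as usual; $S\models\triangle_i\alpha$ iff $\alpha\in B_i$. Define $\mathit{Des}_i(S)=\{\alpha\in\mathcal{L}_0:(\alpha\to\mathsf{rew}_i)\in B_i\}$ and $\mathit{Und}_i(S)=\{\alpha\in\mathcal{L}_0:(\alpha\to\mathsf{pun}_i)\in B_i\}$. Relations on $\mathbf{S}$: $S\,\mathcal{E}_i\,S'$ iff $S'\models\alpha$ for all $\alpha\in B_i$ (where $B_i$ is $i$'s base in $S$); $S\,\mathcal{A}_i\,S'$ iff $S'\models\alpha$ for some $\alpha\in\mathit{Des}_i(S)$; $S\,\mathcal{R}_i\,S'$ iff $S'\models\alpha$ for some $\alpha\in\mathit{Und}_i(S)$.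 A model is a pair $(S,U)$ with $S\in U\subseteq\mathbf{S}$. The language $\mathcal{L}$ is $\varphi::=\alpha\mid\neg\varphi\mid\varphi\wedge\varphi\mid\Box_i\varphi\mid\mathcal{A}_i\varphi\mid\mathcal{R}_i\varphi\mid\mathcal{A}^{\mathsf{real}}_i\varphi\mid\mathcal{R}^{\mathsf{real}}_i\varphi$ with $\alpha\in\mathcal{L}_0$. Semantics: $(S,U)\models\alpha$ iff $S\models\alpha$; Boolean clauses as usual; $(S,U)\models\Box_i\varphi$ iff for all $S'\in U$ with $S\mathcal{E}_iS'$, $(S',U)\models\varphi$; $(S,U)\models\mathcal{A}_i\varphi$ iff for all $S'\in U$ with $(S',U)\models\varphi$, $S\mathcal{A}_iS'$; $(S,U)\models\mathcal{R}_i\varphi$ iff for all $S'\in U$ with $(S',U)\models\varphi$, $S\mathcal{R}_iS'$; $(S,U)\models\mathcal{A}^{\mathsf{real}}_i\varphi$ iff for all $S'\in U$ with $(S',U)\models\varphi$ and $S\mathcal{E}_iS'$, $S\mathcal{A}_iS'$; $(S,U)\models\mathcal{R}^{\mathsf{real}}_i\varphi$ iff for all $S'\in U$ with $(S',U)\models\varphi$ and $S\mathcal{E}_iS'$, $S\mathcal{R}_iS'$. A formula is valid ($\models\varphi$) if it is true in every model $(S,U)$. *)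

theory Defs
  imports Main
begin

text \<open>Agents: a finite (nonempty) type 'a, playing the role of Agt = {1,...,n}.
Atoms: a countably infinite set containing rew_i and pun_i for every agent i.\<close>

datatype 'a atm = Rew 'a | Pun 'a | Prop nat

datatype 'a fm0 = Atom "'a atm" | Neg0 "'a fm0" | Conj0 "'a fm0" "'a fm0" | Bel 'a "'a fm0"

definition Imp0 :: "'a fm0 \<Rightarrow> 'a fm0 \<Rightarrow> 'a fm0" where
  "Imp0 a b = Neg0 (Conj0 a (Neg0 b))"

text \<open>States: belief bases for each agent, and a valuation.\<close>
type_synonym 'a state = "('a \<Rightarrow> 'a fm0 set) \<times> 'a atm set"

fun sat0 :: "'a state \<Rightarrow> 'a fm0 \<Rightarrow> bool" where
  "sat0 S (Atom p) = (p \<in> snd S)"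
| "sat0 S (Neg0 a) = (\<not> sat0 S a)"
| "sat0 S (Conj0 a b) = (sat0 S a \<and> sat0 S b)"
| "sat0 S (Bel i a) = (a \<in> fst S i)"

definition Des :: "'a \<Rightarrow> 'a state \<Rightarrow> 'a fm0 set" where
  "Des i S = {a. Imp0 a (Atom (Rew i)) \<in> fst S i}"

definition Und :: "'a \<Rightarrow> 'a state \<Rightarrow> 'a fm0 set" where
  "Und i S = {a. Imp0 a (Atom (Pun i)) \<in> fst S i}"

definition relE :: "'a \<Rightarrow> 'a state \<Rightarrow> 'a state \<Rightarrow> bool" where
  "relE i S S' = (\<forall>a \<in> fst S i. sat0 S' a)"

definition relA :: "'a \<Rightarrow> 'a state \<Rightarrow> 'a state \<Rightarrow> bool" where
  "relA i S S' = (\<exists>a \<in> Des i S. sat0 S' a)"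

definition relR :: "'a \<Rightarrow> 'a state \<Rightarrow> 'a state \<Rightarrow> bool" where
  "relR i S S' = (\<exists>a \<in> Und i S. sat0 S' a)"

datatype 'a fm =
    Base "'a fm0"
  | Neg "'a fm"
  | Conj "'a fm" "'a fm"
  | Box 'a "'a fm"
  | Att 'a "'a fm"
  | Rep 'a "'a fm"
  | AttR 'a "'a fm"
  | RepR 'a "'a fm"

definition Imp :: "'a fm \<Rightarrow> 'a fm \<Rightarrow> 'a fm" where
  "Imp a b = Neg (Conj a (Neg b))"

definition Iff :: "'a fm \<Rightarrow> 'a fm \<Rightarrow> 'a fm" where
  "Iff a b = Conj (Imp a b) (Imp b a)"

text \<open>Truth in a model (S,U); U is the universe of states.\<close>
fun sat :: "'a state set \<Rightarrow> 'a state \<Rightarrow> 'a fm \<Rightarrow> bool" where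
  "sat U S (Base a) = sat0 S a"
| "sat U S (Neg f) = (\<not> sat U S f)"
| "sat U S (Conj f g) = (sat U S f \<and> sat U S g)"
| "sat U S (Box i f) = (\<forall>S'\<in>U. relE i S S' \<longrightarrow> sat U S' f)"
| "sat U S (Att i f) = (\<forall>S'\<in>U. sat U S' f \<longrightarrow> relA i S S')"
| "sat U S (Rep i f) = (\<forall>S'\<in>U. sat U S' f \<longrightarrow> relR i S S')"
| "sat U S (AttR i f) = (\<forall>S'\<in>U. sat U S' f \<and> relE i S S' \<longrightarrow> relA i S S')"
| "sat U S (RepR i f) = (\<forall>S'\<in>U. sat U S' f \<and> relE i S S' \<longrightarrow> relR i S S')"

definition valid :: "'a fm \<Rightarrow> bool" where
  "valid f = (\<forall>U S. S \<in> U \<longrightarrow> sat U S f)"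

datatype kind = KAtt | KRep | KAttR | KRepR

fun mk_op :: "kind \<Rightarrow> 'a \<Rightarrow> 'a fm \<Rightarrow> 'a fm" where
  "mk_op KAtt i f = Att i f"
| "mk_op KRep i f = Rep i f"
| "mk_op KAttR i f = AttR i f"
| "mk_op KRepR i f = RepR i f"

fun occurs :: "kind \<Rightarrow> 'a fm \<Rightarrow> bool" where
  "occurs k (Base a) = False"
| "occurs k (Neg f) = occurs k f"
| "occurs k (Conj f g) = (occurs k f \<or> occurs k g)"
| "occurs k (Box i f) = occurs k f"
| "occurs k (Att i f) = (k = KAtt \<or> occurs k f)"
| "occurs k (Rep i f) = (k = KRep \<or> occurs k f)"
| "occurs k (AttR i f) = (k = KAttR \<or> occurs k f)"
| "occurs k (RepR i f) = (k = KRepR \<or> occurs k f)"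

end

(*
  For a kind k we build two models U1 <= U2 over the same uniform belief bases: every agent
  believes all odd atoms false and every positive even atom rewarding (if k is an attraction
  kind) or punishing (otherwise). A world W, a set of naturals read as the true Prop atoms,
  is then epistemically accessible iff it contains only even numbers, and desirable
  (resp. undesirable) iff it contains a positive even number. U2 adds a single world T to U1,
  a Prop 0-world that is a counterexample for O (Prop 0), so O (Prop 0) is true in U1 and
  false in U2. A formula without operators of kind k only mentions atoms below some n, and
  every modality it may use can see T only when U1 has a world agreeing with T below n that
  the modality sees as well; a bounded zig-zag argument then shows that the formula has the
  same truth value in U1 and U2.
*)
theory Submission
  imports Defs
begin

lemma sat_Iff_if_valid:
  assumes "valid (Iff \<psi> \<phi>)" "S \<in> U"
  shows "sat U S \<psi> \<longleftrightarrow> sat U S \<phi>"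
proof -
  have "sat U S (Iff \<psi> \<phi>)"
    using assms unfolding valid_def by blast
  then show ?thesis
    by (auto simp: Iff_def Imp_def)
qed

fun prop_bound0 :: "'a fm0 \<Rightarrow> nat" where
  "prop_bound0 (Atom p) = (case p of Prop m \<Rightarrow> Suc m | _ \<Rightarrow> 0)"
| "prop_bound0 (Neg0 \<alpha>) = prop_bound0 \<alpha>"
| "prop_bound0 (Conj0 \<alpha> \<beta>) = max (prop_bound0 \<alpha>) (prop_bound0 \<beta>)"
| "prop_bound0 (Bel j \<alpha>) = 0"  \<comment> \<open>\<open>sat0\<close> never evaluates atoms under \<open>Bel\<close>\<close>

fun prop_bound :: "'a fm \<Rightarrow> nat" where
  "prop_bound (Base \<alpha>) = prop_bound0 \<alpha>"
| "prop_bound (Neg \<phi>) = prop_bound \<phi>"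
| "prop_bound (Conj \<phi> \<psi>) = max (prop_bound \<phi>) (prop_bound \<psi>)"
| "prop_bound (Box j \<phi>) = prop_bound \<phi>"
| "prop_bound (Att j \<phi>) = prop_bound \<phi>"
| "prop_bound (Rep j \<phi>) = prop_bound \<phi>"
| "prop_bound (AttR j \<phi>) = prop_bound \<phi>"
| "prop_bound (RepR j \<phi>) = prop_bound \<phi>"

definition agree_below :: "nat \<Rightarrow> 'a state \<Rightarrow> 'a state \<Rightarrow> bool" where
  "agree_below n X Y \<longleftrightarrow> fst X = fst Y \<and> snd X - Prop ` {n..} = snd Y - Prop ` {n..}"

lemma sat0_agree_below:
  assumes "agree_below n X Y" "prop_bound0 \<alpha> \<le> n"
  shows "sat0 X \<alpha> = sat0 Y \<alpha>"
  using assms(2)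
proof (induction \<alpha>)
  case (Atom p)
  then have "p \<notin> Prop ` {n..}"
    by (cases p) auto
  with assms(1) show ?case
    unfolding agree_below_def by auto
qed (use assms(1) in \<open>auto simp: agree_below_def\<close>)

definition zig_zag :: "('s \<Rightarrow> 's \<Rightarrow> bool) \<Rightarrow> 's set \<Rightarrow> 's set \<Rightarrow> ('s \<Rightarrow> 's \<Rightarrow> bool) \<Rightarrow> bool" where
  "zig_zag Z U1 U2 T \<longleftrightarrow>
     (\<forall>X Y X'. Z X Y \<and> X' \<in> U1 \<and> T X X' \<longrightarrow> (\<exists>Y'\<in>U2. T Y Y' \<and> Z X' Y')) \<and>
     (\<forall>X Y Y'. Z X Y \<and> Y' \<in> U2 \<and> T Y Y' \<longrightarrow> (\<exists>X'\<in>U1. T X X' \<and> Z X' Y'))"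

lemma zig_zag_bex_iff:
  assumes "zig_zag Z U1 U2 T" "Z X Y" "\<And>X' Y'. Z X' Y' \<Longrightarrow> P X' \<longleftrightarrow> Q Y'"
  shows "(\<exists>X'\<in>U1. T X X' \<and> P X') \<longleftrightarrow> (\<exists>Y'\<in>U2. T Y Y' \<and> Q Y')"
  using assms unfolding zig_zag_def by metis

fun counter_rel :: "kind \<Rightarrow> 'a \<Rightarrow> 'a state \<Rightarrow> 'a state \<Rightarrow> bool" where
  "counter_rel KAtt j S S' \<longleftrightarrow> \<not> relA j S S'"
| "counter_rel KRep j S S' \<longleftrightarrow> \<not> relR j S S'"
| "counter_rel KAttR j S S' \<longleftrightarrow> relE j S S' \<and> \<not> relA j S S'"
| "counter_rel KRepR j S S' \<longleftrightarrow> relE j S S' \<and> \<not> relR j S S'"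

lemma sat_mk_op: "sat U S (mk_op k j \<phi>) \<longleftrightarrow> \<not> (\<exists>S'\<in>U. counter_rel k j S S' \<and> sat U S' \<phi>)"
  by (cases k) auto

lemma sat_Box: "sat U S (Box j \<phi>) \<longleftrightarrow> \<not> (\<exists>S'\<in>U. relE j S S' \<and> \<not> sat U S' \<phi>)"
  by auto

lemma zig_zag_sat_Box_iff:
  assumes "zig_zag Z U1 U2 (relE j)" "Z X Y"
    and "\<And>X' Y'. Z X' Y' \<Longrightarrow> sat U1 X' \<phi> \<longleftrightarrow> sat U2 Y' \<phi>"
  shows "sat U1 X (Box j \<phi>) \<longleftrightarrow> sat U2 Y (Box j \<phi>)"
  unfolding sat_Box using zig_zag_bex_iff[OF assms(1,2), of "\<lambda>X'. \<not> sat U1 X' \<phi>"] assms(3)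
  by simp

lemma zig_zag_sat_mk_op_iff:
  assumes "zig_zag Z U1 U2 (counter_rel k j)" "Z X Y"
    and "\<And>X' Y'. Z X' Y' \<Longrightarrow> sat U1 X' \<phi> \<longleftrightarrow> sat U2 Y' \<phi>"
  shows "sat U1 X (mk_op k j \<phi>) \<longleftrightarrow> sat U2 Y (mk_op k j \<phi>)"
  unfolding sat_mk_op using zig_zag_bex_iff[OF assms] by simp

lemma sat_zig_zag_invariant:
  assumes agree: "\<And>X Y. Z X Y \<Longrightarrow> agree_below n X Y"
    and box: "\<And>j. zig_zag Z U1 U2 (relE j)"
    and ops: "\<And>k' j. k \<noteq> k' \<Longrightarrow> zig_zag Z U1 U2 (counter_rel k' j)"
    and "\<not> occurs k \<phi>" "prop_bound \<phi> \<le> n" "Z X Y"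
  shows "sat U1 X \<phi> = sat U2 Y \<phi>"
  using assms(4-)
proof (induction \<phi> arbitrary: X Y)
  case (Base \<alpha>)
  then show ?case
    using sat0_agree_below[OF agree[OF Base.prems(3)], of \<alpha>] by simp
next
  case (Box j \<phi>)
  then show ?case
    using zig_zag_sat_Box_iff[OF box] by simp
next
  case (Att j \<phi>)
  then show ?case
    using zig_zag_sat_mk_op_iff[OF ops, of KAtt] by simp
next
  case (Rep j \<phi>)
  then show ?case
    using zig_zag_sat_mk_op_iff[OF ops, of KRep] by simp
next
  case (AttR j \<phi>)
  then show ?case
    using zig_zag_sat_mk_op_iff[OF ops, of KAttR] by simp
next
  case (RepR j \<phi>)
  then show ?case
    using zig_zag_sat_mk_op_iff[OF ops, of KRepR] by simp
qed simp_all

fun attractive :: "kind \<Rightarrow> bool" where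
  "attractive KAtt = True"
| "attractive KAttR = True"
| "attractive KRep = False"
| "attractive KRepR = False"

fun realistic :: "kind \<Rightarrow> bool" where
  "realistic KAtt = False"
| "realistic KRep = False"
| "realistic KAttR = True"
| "realistic KRepR = True"

definition payoff :: "bool \<Rightarrow> 'a \<Rightarrow> 'a atm" where
  "payoff a = (if a then Rew else Pun)"

definition world_beliefs :: "bool \<Rightarrow> 'a \<Rightarrow> 'a fm0 set" where
  "world_beliefs a j = range (\<lambda>m. Neg0 (Atom (Prop (2*m+1))))
     \<union> range (\<lambda>m. Imp0 (Atom (Prop (2*m+2))) (Atom (payoff a j)))"

text \<open>All reward (resp. punishment) atoms are true in every world, so the implications in the
  beliefs hold everywhere and only the odd atoms restrict epistemic accessibility.\<close>

definition world :: "bool \<Rightarrow> nat set \<Rightarrow> 'a state" where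
  "world a W = (world_beliefs a, range (payoff a) \<union> Prop ` W)"

lemma relE_world: "relE j (world a W) (world a W') \<longleftrightarrow> (\<forall>x\<in>W'. even x)"
proof -
  have "relE j (world a W) (world a W') \<longleftrightarrow> (\<forall>m. 2*m+1 \<notin> W')"
    by (simp add: relE_def world_def world_beliefs_def Imp0_def payoff_def ball_Un image_iff)
  also have "\<dots> \<longleftrightarrow> (\<forall>x\<in>W'. even x)"
  proof
    assume odd_free: "\<forall>m. 2*m+1 \<notin> W'"
    show "\<forall>x\<in>W'. even x"
    proof
      fix x
      assume "x \<in> W'"
      with odd_free show "even x"
        by (metis oddE)
    qed
  qed auto
  finally show ?thesis .
qed

lemma Des_world: "Des j (world a W) = (if a then range (\<lambda>m. Atom (Prop (2*m+2))) else {})"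
proof -
  have "Imp0 \<alpha> (Atom (Rew j)) \<in> world_beliefs a j \<longleftrightarrow> a \<and> (\<exists>m. \<alpha> = Atom (Prop (2*m+2)))" for \<alpha>
    by (simp add: world_beliefs_def Imp0_def payoff_def image_iff)
  then show ?thesis
    by (simp add: Des_def world_def set_eq_iff image_iff)
qed

lemma Und_world: "Und j (world a W) = (if a then {} else range (\<lambda>m. Atom (Prop (2*m+2))))"
proof -
  have "Imp0 \<alpha> (Atom (Pun j)) \<in> world_beliefs a j \<longleftrightarrow> \<not> a \<and> (\<exists>m. \<alpha> = Atom (Prop (2*m+2)))" for \<alpha>
    by (simp add: world_beliefs_def Imp0_def payoff_def image_iff)
  then show ?thesis
    by (simp add: Und_def world_def set_eq_iff image_iff)
qed

lemma ex_positive_even_iff: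
  fixes W :: "nat set"
  shows "(\<exists>m. 2*m+2 \<in> W) \<longleftrightarrow> (\<exists>x\<in>W. even x \<and> x \<noteq> 0)"
proof
  assume "\<exists>x\<in>W. even x \<and> x \<noteq> 0"
  then obtain k where "2 * k \<in> W" "k \<noteq> 0"
    by (auto elim!: evenE)
  then obtain m where "2 * Suc m \<in> W"
    using not0_implies_Suc by blast
  then show "\<exists>m. 2*m+2 \<in> W"
    by auto
next
  assume "\<exists>m. 2*m+2 \<in> W"
  then obtain m where "2*m+2 \<in> W" ..
  then show "\<exists>x\<in>W. even x \<and> x \<noteq> 0"
    by (intro bexI[of _ "2*m+2"]) simp_all
qed

lemma relA_world: "relA j (world a W) (world a W') \<longleftrightarrow> a \<and> (\<exists>x\<in>W'. even x \<and> x \<noteq> 0)"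
  unfolding relA_def Des_world ex_positive_even_iff[symmetric]
  by (auto simp: world_def payoff_def)

lemma relR_world: "relR j (world a W) (world a W') \<longleftrightarrow> \<not> a \<and> (\<exists>x\<in>W'. even x \<and> x \<noteq> 0)"
  unfolding relR_def Und_world ex_positive_even_iff[symmetric]
  by (auto simp: world_def payoff_def)

definition counter_world :: "bool \<Rightarrow> kind \<Rightarrow> nat set \<Rightarrow> bool" where
  "counter_world a k W \<longleftrightarrow>
     (realistic k \<longrightarrow> (\<forall>x\<in>W. even x)) \<and> \<not> (attractive k = a \<and> (\<exists>x\<in>W. even x \<and> x \<noteq> 0))"

lemma counter_rel_world: "counter_rel k j (world a W) (world a W') \<longleftrightarrow> counter_world a k W'"
  by (cases k) (auto simp: counter_world_def relE_world relA_world relR_world)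

definition approximates :: "nat set set \<Rightarrow> nat set set \<Rightarrow> (nat set \<Rightarrow> bool) \<Rightarrow> bool" where
  "approximates V1 V2 P \<longleftrightarrow>
     (\<forall>T\<in>V2. P T \<longrightarrow> (\<forall>n. \<exists>W\<in>V1. P W \<and> W \<inter> {..<n} = T \<inter> {..<n}))"

lemma approximates_insert:
  assumes "\<And>n. P T \<Longrightarrow> \<exists>W\<in>V. P W \<and> W \<inter> {..<n} = T \<inter> {..<n}"
  shows "approximates V (insert T V) P"
  using assms unfolding approximates_def by blast

definition world_agree :: "bool \<Rightarrow> nat \<Rightarrow> nat set set \<Rightarrow> nat set set \<Rightarrow> 'a state \<Rightarrow> 'a state \<Rightarrow> bool" where
  "world_agree a n V1 V2 X Y \<longleftrightarrow>
     (\<exists>W\<in>V1. \<exists>W'\<in>V2. X = world a W \<and> Y = world a W' \<and> W \<inter> {..<n} = W' \<inter> {..<n})"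

lemma agree_below_world:
  assumes "W \<inter> {..<n} = W' \<inter> {..<n}"
  shows "agree_below n (world a W) (world a W')"
proof -
  have Prop_below: "Prop ` V - Prop ` {n..} = Prop ` (V \<inter> {..<n})" for V
    by (auto simp: image_iff)
  show ?thesis
    by (simp add: agree_below_def world_def Un_Diff Prop_below assms)
qed

lemma zig_zag_world:
  assumes "V1 \<subseteq> V2" "approximates V1 V2 P" "\<And>W W'. T (world a W) (world a W') \<longleftrightarrow> P W'"
  shows "zig_zag (world_agree a n V1 V2) (world a ` V1) (world a ` V2) T"
  unfolding zig_zag_def
proof (intro conjI allI impI)
  fix X Y X'
  assume "world_agree a n V1 V2 X Y \<and> X' \<in> world a ` V1 \<and> T X X'"
  then obtain W' W1 where "Y = world a W'" "X' = world a W1" "W1 \<in> V1" "P W1"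
    unfolding world_agree_def using assms(3) by auto
  then show "\<exists>Y'\<in>world a ` V2. T Y Y' \<and> world_agree a n V1 V2 X' Y'"
    using assms(1,3) unfolding world_agree_def by blast
next
  fix X Y Y'
  assume "world_agree a n V1 V2 X Y \<and> Y' \<in> world a ` V2 \<and> T Y Y'"
  then obtain W' W2 where "Y = world a W'" "Y' = world a W2" "W2 \<in> V2" "P W2"
    unfolding world_agree_def using assms(3) by auto
  then obtain W1 where "W1 \<in> V1" "P W1" "W1 \<inter> {..<n} = W2 \<inter> {..<n}"
    using assms(2) unfolding approximates_def by blast
  then show "\<exists>X'\<in>world a ` V1. T X X' \<and> world_agree a n V1 V2 X' Y'"
    using \<open>Y' = world a W2\<close> \<open>W2 \<in> V2\<close> \<open>world_agree a n V1 V2 X Y \<and> _\<close> assms(3)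
    unfolding world_agree_def by blast
qed

lemma sat_world_image_eq:
  fixes \<phi> :: "'a fm"
  assumes "V1 \<subseteq> V2" "approximates V1 V2 (\<lambda>W. \<forall>x\<in>W. even x)"
    and "\<And>k'. k \<noteq> k' \<Longrightarrow> approximates V1 V2 (counter_world a k')"
    and "\<not> occurs k \<phi>" "W \<in> V1"
  shows "sat (world a ` V1) (world a W) \<phi> = sat (world a ` V2) (world a W) \<phi>"
proof (rule sat_zig_zag_invariant)
  show "agree_below (prop_bound \<phi>) X Y" if "world_agree a (prop_bound \<phi>) V1 V2 X Y" for X Y :: "'a state"
    using that agree_below_world unfolding world_agree_def by blast
  show "zig_zag (world_agree a (prop_bound \<phi>) V1 V2) (world a ` V1) (world a ` V2) (relE j)" for j :: 'a
    using assms(1,2) relE_world by (rule zig_zag_world)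
  show "zig_zag (world_agree a (prop_bound \<phi>) V1 V2) (world a ` V1) (world a ` V2) (counter_rel k' j)"
    if "k \<noteq> k'" for k' and j :: 'a
    using assms(1) assms(3)[OF that] counter_rel_world by (rule zig_zag_world)
  show "world_agree a (prop_bound \<phi>) V1 V2 (world a W) (world a W)"
    using assms(1,5) unfolding world_agree_def by blast
qed (use assms(4) in simp_all)

lemma sat_world_mk_op:
  "sat (world a ` V) (world a W) (mk_op k j (Base (Atom (Prop 0))))
     \<longleftrightarrow> \<not> (\<exists>W'\<in>V. counter_world a k W' \<and> 0 \<in> W')"
proof -
  have Prop0: "Prop 0 \<in> snd (world a W') \<longleftrightarrow> 0 \<in> W'" for W'
    by (auto simp: world_def payoff_def)
  show ?thesis
    by (simp add: sat_mk_op counter_rel_world Prop0)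
qed


definition separating :: "kind \<Rightarrow> nat set set \<Rightarrow> nat set set \<Rightarrow> bool" where
  "separating k V1 V2 \<longleftrightarrow>
     V1 \<subseteq> V2 \<and> V1 \<noteq> {} \<and>
     approximates V1 V2 (\<lambda>W. \<forall>x\<in>W. even x) \<and>
     (\<forall>k'. k \<noteq> k' \<longrightarrow> approximates V1 V2 (counter_world (attractive k) k')) \<and>
     \<not> (\<exists>W\<in>V1. counter_world (attractive k) k W \<and> 0 \<in> W) \<and>
     (\<exists>W\<in>V2. counter_world (attractive k) k W \<and> 0 \<in> W)"

text \<open>The extra world \<open>{0, 1}\<close> is epistemically inaccessible, and below \<open>n\<close> it agrees with
  \<open>{0, 1, 2n+2}\<close>, which only the plain operators of the polarity of \<open>k\<close> tell apart from it.\<close>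

lemma separating_plain:
  assumes "\<not> realistic k"
  shows "separating k (range (\<lambda>m. {0, 1, 2*m+2})) (insert {0, 1} (range (\<lambda>m. {0, 1, 2*m+2})))"
    (is "separating k ?V (insert ?T ?V)")
  unfolding separating_def
proof (intro conjI allI impI)
  show "?V \<subseteq> insert ?T ?V" "?V \<noteq> {}"
    by auto
  show "approximates ?V (insert ?T ?V) (\<lambda>W. \<forall>x\<in>W. even x)"
    by (rule approximates_insert) simp
  show "approximates ?V (insert ?T ?V) (counter_world (attractive k) k')" if "k \<noteq> k'" for k'
  proof (rule approximates_insert)
    fix n :: nat
    assume "counter_world (attractive k) k' ?T"
    with assms that have "counter_world (attractive k) k' {0, 1, 2*n+2}"
      by (cases k; cases k') (auto simp: counter_world_def)
    moreover have "{0, 1, 2*n+2} \<in> ?V" "{0, 1, 2*n+2} \<inter> {..<n} = ?T \<inter> {..<n}"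
      by auto
    ultimately show "\<exists>W\<in>?V. counter_world (attractive k) k' W \<and> W \<inter> {..<n} = ?T \<inter> {..<n}"
      by blast
  qed
  show "\<not> (\<exists>W\<in>?V. counter_world (attractive k) k W \<and> 0 \<in> W)"
    by (auto simp: counter_world_def)
  show "\<exists>W\<in>insert ?T ?V. counter_world (attractive k) k W \<and> 0 \<in> W"
    using assms by (auto simp: counter_world_def)
qed

text \<open>Below \<open>n\<close> the extra world \<open>{0}\<close> agrees with \<open>{0, 2n+2}\<close>, which is equally accessible,
  and with \<open>{0, 2n+1}\<close>, which equally lacks a positive even atom; only the realistic operators of
  the polarity of \<open>k\<close> test both properties at once.\<close>

lemma separating_realistic:
  assumes "realistic k"
  shows "separating k (range (\<lambda>m. {0, m+1})) (insert {0} (range (\<lambda>m. {0, m+1})))"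
    (is "separating k ?V (insert ?T ?V)")
  unfolding separating_def
proof (intro conjI allI impI)
  have even_witness: "{0, 2*n+2} \<in> ?V" "{0, 2*n+2} \<inter> {..<n} = ?T \<inter> {..<n}" for n :: nat
    by (auto intro: range_eqI[of _ _ "2*n+1"])
  have odd_witness: "{0, 2*n+1} \<in> ?V" "{0, 2*n+1} \<inter> {..<n} = ?T \<inter> {..<n}" for n :: nat
    by (auto intro: range_eqI[of _ _ "2*n"])
  show "?V \<subseteq> insert ?T ?V" "?V \<noteq> {}"
    by auto
  show "approximates ?V (insert ?T ?V) (\<lambda>W. \<forall>x\<in>W. even x)"
  proof (rule approximates_insert)
    fix n :: nat
    have "\<forall>x\<in>{0, 2*n+2}. even x"
      by simp
    with even_witness[of n] show "\<exists>W\<in>?V. (\<forall>x\<in>W. even x) \<and> W \<inter> {..<n} = ?T \<inter> {..<n}"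
      by blast
  qed
  show "approximates ?V (insert ?T ?V) (counter_world (attractive k) k')" if "k \<noteq> k'" for k'
  proof (rule approximates_insert)
    fix n :: nat
    from assms that have
      "counter_world (attractive k) k' {0, 2*n+2} \<or> counter_world (attractive k) k' {0, 2*n+1}"
      by (cases k; cases k') (auto simp: counter_world_def)
    with even_witness[of n] odd_witness[of n]
    show "\<exists>W\<in>?V. counter_world (attractive k) k' W \<and> W \<inter> {..<n} = ?T \<inter> {..<n}"
      by blast
  qed
  show "\<not> (\<exists>W\<in>?V. counter_world (attractive k) k W \<and> 0 \<in> W)"
    using assms by (auto simp: counter_world_def)
  show "\<exists>W\<in>insert ?T ?V. counter_world (attractive k) k W \<and> 0 \<in> W"
    using assms by (auto simp: counter_world_def)
qed

lemma ex_separating: "\<exists>V1 V2. separating k V1 V2"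
  using separating_plain separating_realistic by blast

lemma not_valid_Iff_if_separating:
  assumes sep: "separating k V1 V2" and "\<not> occurs k \<phi>"
  shows "\<not> valid (Iff (mk_op k i (Base (Atom (Prop 0)))) \<phi>)"
proof
  assume valid: "valid (Iff (mk_op k i (Base (Atom (Prop 0)))) \<phi>)"
  define a where "a = attractive k"
  from sep obtain W where "W \<in> V1" "V1 \<subseteq> V2"
    unfolding separating_def by blast
  then have in_models: "world a W \<in> world a ` V1" "world a W \<in> world a ` V2"
    by blast+
  have "sat (world a ` V1) (world a W) \<phi> = sat (world a ` V2) (world a W) \<phi>"
    using sep \<open>\<not> occurs k \<phi>\<close> \<open>W \<in> V1\<close> unfolding separating_def a_def
    by (intro sat_world_image_eq) auto
  moreover have "sat (world a ` V1) (world a W) (mk_op k i (Base (Atom (Prop 0))))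
      \<noteq> sat (world a ` V2) (world a W) (mk_op k i (Base (Atom (Prop 0))))"
    using sep unfolding separating_def sat_world_mk_op a_def by blast
  ultimately show False
    using sat_Iff_if_valid[OF valid in_models(1)] sat_Iff_if_valid[OF valid in_models(2)] by blast
qed

theorem theorem1:
  fixes i :: "'a :: finite"
  shows "\<forall>k. \<exists>p :: 'a atm. \<forall>\<phi> :: 'a fm.
           \<not> occurs k \<phi> \<longrightarrow> \<not> valid (Iff (mk_op k i (Base (Atom p))) \<phi>)"
proof (intro allI exI[of _ "Prop 0"] impI)
  fix k and \<phi> :: "'a fm"
  assume "\<not> occurs k \<phi>"
  obtain V1 V2 where "separating k V1 V2"
    using ex_separating by blast
  then show "\<not> valid (Iff (mk_op k i (Base (Atom (Prop 0)))) \<phi>)"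
    using \<open>\<not> occurs k \<phi>\<close> by (rule not_valid_Iff_if_separating)
qed

end
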